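(* Let $K$ be a number field, let $X\subseteq M_d(K)$ be closed in the linear Zariski topology, let $\mathcal S=\langle X\rangle$, and let $R\subseteq\mathcal S$ be a set of completely pseudo-regular matrices. (1) If $A,B\in R$ lie in the same strongly connected component of $G(R)$, then $A\sim_{\mathcal S}B$. (2) For every $r$, the graph $G(R)$ has at most $\binom{d}{r}$ strongly connected components consisting of matrices of rank $r$.
   Context: A matrix $C$ is completely pseudo-regular if it lies in a subgroup of the multiplicative semigroup $M_d(K)$ (equivalently $\operatorname{im}C\cap\ker C=0$). $G(R)$ is the directed graph with vertex set $R$ and a directed edge $A\to B$ whenever $\ker(B)\cap\operatorname{im}(A)=0$ (loops allowed). For $P,Q\in M_d(K)$ write $P\parallel Q$ if $\operatorname{im}P=\operatorname{im}Q$ and $\ker P=\ker Q$; for $P,Q\in\mathcal S$, $P\sim_{\mathcal S}Q$ means there exist $C,D,C',D'\in\mathcal S\cup\{I\}$ with $Q\parallel DPC$ and $P\parallel D'QC'$. *)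

theory Defs
  imports "HOL-Analysis.Analysis"
begin

definition number_field_type :: "'a::field_char_0 itself \<Rightarrow> bool" where
  "number_field_type _ \<longleftrightarrow>
     (\<exists>B::'a set. finite B \<and> (\<forall>x::'a. \<exists>c::'a \<Rightarrow> rat. x = (\<Sum>b\<in>B. of_rat (c b) * b)))"

definition mscale :: "'a::field \<Rightarrow> 'a^'n^'n \<Rightarrow> 'a^'n^'n" where
  "mscale c M = (\<chi> i j. c * M $ i $ j)"

definition lin_subspace :: "('a::field^'n^'n) set \<Rightarrow> bool" where
  "lin_subspace V \<longleftrightarrow> 0 \<in> V \<and> (\<forall>M\<in>V. \<forall>N\<in>V. M + N \<in> V) \<and> (\<forall>c. \<forall>M\<in>V. mscale c M \<in> V)"

definition affine_subspace :: "('a::field^'n^'n) set \<Rightarrow> bool" where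
  "affine_subspace S \<longleftrightarrow> (\<exists>M V. lin_subspace V \<and> S = (\<lambda>N. M + N) ` V)"

definition linear_zariski_closed :: "('a::field^'n^'n) set \<Rightarrow> bool" where
  "linear_zariski_closed X \<longleftrightarrow> (\<exists>F. finite F \<and> (\<forall>S\<in>F. affine_subspace S) \<and> X = \<Union>F)"

inductive_set gen_semigroup :: "('a::field^'n^'n) set \<Rightarrow> ('a^'n^'n) set" for X where
  base: "A \<in> X \<Longrightarrow> A \<in> gen_semigroup X"
| mult: "A \<in> gen_semigroup X \<Longrightarrow> B \<in> gen_semigroup X \<Longrightarrow> A ** B \<in> gen_semigroup X"

definition mker :: "'a::field^'n^'n \<Rightarrow> ('a^'n) set" where
  "mker A = {x. A *v x = 0}"

definition mim :: "'a::field^'n^'n \<Rightarrow> ('a^'n) set" where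
  "mim A = range (\<lambda>x. A *v x)"

text \<open>\<open>C\<close> lies in a subgroup of the multiplicative semigroup \<open>M_d(K)\<close>.\<close>
definition completely_pseudo_regular :: "'a::field^'n^'n \<Rightarrow> bool" where
  "completely_pseudo_regular C \<longleftrightarrow>
     (\<exists>G::('a^'n^'n) set. C \<in> G \<and> (\<forall>A\<in>G. \<forall>B\<in>G. A ** B \<in> G) \<and>
        (\<exists>E\<in>G. \<forall>A\<in>G. E ** A = A \<and> A ** E = A \<and> (\<exists>A'\<in>G. A ** A' = E \<and> A' ** A = E)))"

definition graph_edges :: "('a::field^'n^'n) set \<Rightarrow> (('a^'n^'n) \<times> ('a^'n^'n)) set" where
  "graph_edges R = {(A, B). A \<in> R \<and> B \<in> R \<and> mker B \<inter> mim A = {0}}"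

definition same_scc :: "('a::field^'n^'n) set \<Rightarrow> 'a^'n^'n \<Rightarrow> 'a^'n^'n \<Rightarrow> bool" where
  "same_scc R A B \<longleftrightarrow> A \<in> R \<and> B \<in> R \<and> (A, B) \<in> (graph_edges R)\<^sup>* \<and> (B, A) \<in> (graph_edges R)\<^sup>*"

definition sccs :: "('a::field^'n^'n) set \<Rightarrow> ('a^'n^'n) set set" where
  "sccs R = R // {(A, B). same_scc R A B}"

definition mpar :: "'a::field^'n^'n \<Rightarrow> 'a^'n^'n \<Rightarrow> bool" where
  "mpar P Q \<longleftrightarrow> mim P = mim Q \<and> mker P = mker Q"

definition sim_S :: "('a::field^'n^'n) set \<Rightarrow> 'a^'n^'n \<Rightarrow> 'a^'n^'n \<Rightarrow> bool" where
  "sim_S S P Q \<longleftrightarrow> P \<in> S \<and> Q \<in> S \<and>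
     (\<exists>C\<in>S \<union> {mat 1}. \<exists>D\<in>S \<union> {mat 1}. \<exists>C'\<in>S \<union> {mat 1}. \<exists>D'\<in>S \<union> {mat 1}.
        mpar Q (D ** P ** C) \<and> mpar P (D' ** Q ** C'))"

end

theory Submission
  imports Defs
begin

text \<open>
  (1) If \<open>ker V \<inter> im U = 0\<close>, then left multiplication by \<open>V\<close> does not change the kernel of any
  matrix whose image lies in \<open>im U\<close>. Multiplying by the vertices of a walk of \<open>G(R)\<close> one after
  the other therefore preserves kernels while moving images. Walking from \<open>B\<close> to \<open>A\<close> and back
  yields \<open>D A C\<close> with the kernel of \<open>B\<close> and image inside \<open>im B\<close>, and rank--nullity forces
  equality of the images.

  (2) Fix \<open>J\<close> with \<open>|J| = r\<close>. To a matrix \<open>A\<close> of rank \<open>r\<close> attach the alternating \<open>r\<close>-form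
  \<open>F\<^sub>A(x) = det(x\<^sub>1, \<dots>, x\<^sub>r, w\<^sub>1, \<dots>, w\<^sub>d\<^sub>-\<^sub>r)\<close>, where the \<open>w\<^sub>i\<close> form a basis of \<open>ker A\<close>.
  On a basis of \<open>im B\<close> it is nonzero iff \<open>ker A \<inter> im B = 0\<close>, i.e. iff \<open>B \<rightarrow> A\<close> is an edge.
  Choose one matrix from each component of rank \<open>r\<close>; complete pseudo-regularity puts a loop at
  each of them, and ordering the components by repeatedly removing a sink of the condensation
  makes the matrix \<open>(F\<^sub>A(basis of im B))\<close> triangular with nonzero diagonal. So the \<open>F\<^sub>A\<close>
  are linearly independent in the space of alternating \<open>r\<close>-forms on \<open>K\<^sup>d\<close>, which has
  dimension \<open>d choose r\<close>.
\<close>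

section \<open>Image, kernel and rank\<close>

lemma subspace_mim: "vec.subspace (mim A)"
  unfolding mim_def using vec.linear_subspace_image[OF matrix_vector_mul_linear_gen vec.subspace_UNIV]
  by simp

lemma subspace_mker: "vec.subspace (mker A)"
  unfolding mker_def by (rule vec.subspace_kernel)

lemma in_mker_iff [simp]: "x \<in> mker A \<longleftrightarrow> A *v x = 0"
  by (simp add: mker_def)

lemma mult_in_mim [simp]: "A *v x \<in> mim A"
  by (simp add: mim_def)

lemma mim_mult_subset: "mim (A ** B) \<subseteq> mim A"
  for A B :: "'a::field^'n^'n"
  by (auto simp: mim_def simp flip: matrix_vector_mul_assoc)

lemma subspace_complement_exists:
  fixes K :: "('a::field^'n) set"
  assumes K: "vec.subspace K"
  obtains C where "vec.independent C" "card C = CARD('n) - vec.dim K"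
    "K \<inter> vec.span C \<subseteq> {0}" "\<And>x. \<exists>k\<in>K. \<exists>s\<in>vec.span C. x = k + s"
proof -
  obtain BK where BK: "BK \<subseteq> K" "vec.independent BK" "K \<subseteq> vec.span BK" "card BK = vec.dim K"
    using vec.basis_exists[of K] by metis
  obtain B where B: "BK \<subseteq> B" "vec.independent B" "UNIV \<subseteq> vec.span B"
    using vec.maximal_independent_subset_extend[OF subset_UNIV BK(2)] by metis
  have "finite B" using B(2) by (rule vec.finiteI_independent)
  have card_B: "card B = CARD('n)"
    using vec.basis_card_eq_dim[OF subset_UNIV B(3,2)] by (simp add: vec_dim_card card_cart_basis)
  define C where "C = B - BK"
  have indep_C: "vec.independent C"
    unfolding C_def using B(2) by (rule vec.independent_mono) auto
  have card_C: "card C = CARD('n) - vec.dim K"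
    unfolding C_def using card_Diff_subset[OF finite_subset[OF B(1) \<open>finite B\<close>] B(1)] card_B BK(4)
    by simp
  let ?sums = "{k + s |k s. k \<in> K \<and> s \<in> vec.span C}"
  have "B \<subseteq> ?sums"
  proof
    fix b assume "b \<in> B"
    then have "b = b + 0 \<and> b \<in> K \<and> 0 \<in> vec.span C \<or> b = 0 + b \<and> 0 \<in> K \<and> b \<in> vec.span C"
      using BK(1) vec.span_base[of b C] vec.span_zero vec.subspace_0[OF K] by (cases "b \<in> BK") (auto simp: C_def)
    then show "b \<in> ?sums" by blast
  qed
  then have sums: "?sums = UNIV"
    using vec.span_minimal[OF _ vec.subspace_sums[OF K vec.subspace_span]] B(3) by blast
  have "vec.dim (K \<inter> vec.span C) = 0"
    using vec.dim_sums_Int[OF K vec.subspace_span[of C]] dim_subset_UNIV_cart_gen[of K]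
    unfolding sums vec.dim_span_eq_card_independent[OF indep_C] card_C vec_dim_card
    by linarith
  then have "K \<inter> vec.span C \<subseteq> {0}" by simp
  with indep_C card_C sums show thesis using that by blast
qed

lemma dim_mim_add_dim_mker: "vec.dim (mim A) + vec.dim (mker A) = CARD('n)"
  for A :: "'a::field^'n^'n"
proof -
  obtain C where indep_C: "vec.independent C" and card_C: "card C = CARD('n) - vec.dim (mker A)"
    and disjoint: "mker A \<inter> vec.span C \<subseteq> {0}" and sums: "\<And>x. \<exists>k\<in>mker A. \<exists>s\<in>vec.span C. x = k + s"
    using subspace_complement_exists[OF subspace_mker] by metis
  have "inj_on ((*v) A) (vec.span (vec.span C))"
  proof (rule inj_onI)
    fix x y assume "x \<in> vec.span (vec.span C)" "y \<in> vec.span (vec.span C)" "A *v x = A *v y"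
    then have "x - y \<in> mker A \<inter> vec.span C"
      by (simp add: vec.span_diff vec.span_span matrix_vector_mult_diff_distrib)
    then show "x = y" using disjoint by auto
  qed
  then have "vec.dim ((*v) A ` vec.span C) = card C"
    using vec.dim_image_eq[OF matrix_vector_mul_linear_gen] vec.dim_span_eq_card_independent[OF indep_C]
    by metis
  moreover have "(*v) A ` vec.span C = mim A"
  proof
    show "mim A \<subseteq> (*v) A ` vec.span C"
    proof
      fix z assume "z \<in> mim A"
      then obtain x where "z = A *v x" by (auto simp: mim_def)
      moreover obtain k s where "k \<in> mker A" "s \<in> vec.span C" "x = k + s" using sums by blast
      ultimately show "z \<in> (*v) A ` vec.span C" by (simp add: matrix_vector_right_distrib)
    qed
  qed auto
  ultimately show ?thesis using card_C dim_subset_UNIV_cart_gen[of "mker A"] by simp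
qed

lemma mim_eq_if_mker_eq:
  fixes P Q :: "'a::field^'n^'n"
  assumes "mker P = mker Q" "mim P \<subseteq> mim Q"
  shows "mim P = mim Q"
  using vec.subspace_dim_equal[OF subspace_mim subspace_mim assms(2)]
    dim_mim_add_dim_mker[of P] dim_mim_add_dim_mker[of Q] assms(1)
  by simp

lemma dim_rows_le_dim_columns_gen:
  fixes A :: "'a::field^'n^'m"
  shows "vec.dim (rows A) \<le> vec.dim (columns A)"
proof -
  obtain B where B: "vec.independent B" "columns A \<subseteq> vec.span B" "card B = vec.dim (columns A)"
    using vec.basis_exists[of "columns A"] by metis
  have "finite B" using B(1) by (rule vec.finiteI_independent)
  have "\<exists>u. column j A = (\<Sum>v\<in>B. u v *s v)" for j
    using B(2) vec.span_finite[OF \<open>finite B\<close>] by (auto simp: columns_def)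
  then obtain u where u: "\<And>j. column j A = (\<Sum>v\<in>B. u j v *s v)" by metis
  define row_of where "row_of v = (\<chi> j. u j v)" for v
  have "row i A = (\<Sum>v\<in>B. (v $ i) *s row_of v)" for i
  proof -
    have "row i A $ j = column j A $ i" for j by (simp add: row_def column_def)
    then show ?thesis
      by (simp add: vec_eq_iff u sum_component row_of_def mult.commute)
  qed
  then have "row i A \<in> vec.span (row_of ` B)" for i
    by (auto intro!: vec.span_sum vec.span_scale intro: vec.span_base)
  then have "rows A \<subseteq> vec.span (row_of ` B)"
    by (auto simp: rows_def)
  then have "vec.dim (rows A) \<le> card (row_of ` B)"
    using \<open>finite B\<close> by (intro vec.dim_le_card) auto
  also have "\<dots> \<le> card B" using \<open>finite B\<close> by (rule card_image_le)
  finally show ?thesis using B(3) by simp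
qed

lemma span_columns_eq_mim: "vec.span (columns A) = mim A"
  for A :: "'a::field^'n^'n"
proof
  have "column j A = A *v axis j 1" for j
    by (simp add: vec_eq_iff matrix_vector_mult_def axis_def column_def if_distrib cong: if_cong)
  then show "vec.span (columns A) \<subseteq> mim A"
    by (intro vec.span_minimal[OF _ subspace_mim]) (auto simp: columns_def)
  show "mim A \<subseteq> vec.span (columns A)"
    using matrix_vector_mult_in_columnspace_gen by (auto simp: mim_def)
qed

lemma rank_eq_dim_mim: "rank A = vec.dim (mim A)"
  for A :: "'a::field^'n^'n"
proof -
  have "vec.dim (rows A) = vec.dim (columns A)"
    using dim_rows_le_dim_columns_gen[of A] dim_rows_le_dim_columns_gen[of "transpose A"] by simp
  then show ?thesis
    by (metis row_rank_def_gen span_columns_eq_mim vec.dim_span)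
qed

section \<open>Walks in the graph\<close>

lemma mker_mult_eq_if_trivial_intersection:
  assumes "mker V \<inter> mim U = {0}" "mim M \<subseteq> mim U"
  shows "mker (V ** M) = mker M"
proof -
  have "M *v x = 0" if "V *v (M *v x) = 0" for x
  proof -
    have "M *v x \<in> mker V \<inter> mim U"
      using that assms(2) mult_in_mim[of M x] by auto
    then show ?thesis using assms(1) by simp
  qed
  then have "(V ** M) *v x = 0 \<longleftrightarrow> M *v x = 0" for x
    by (metis matrix_vector_mul_assoc matrix_vector_mult_0_right)
  then show ?thesis by auto
qed

lemma mult_closed_insert_mat_1:
  assumes "\<forall>A\<in>S. \<forall>B\<in>S. A ** B \<in> S" "A \<in> S \<union> {mat 1}" "B \<in> S \<union> {mat 1}"
  shows "A ** B \<in> S \<union> {mat 1}"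
  using assms by (auto simp: matrix_mul_lid matrix_mul_rid)

context
  fixes R S :: "('a::field^'n^'n) set"
  assumes R_subset: "R \<subseteq> S" and S_closed: "\<forall>A\<in>S. \<forall>B\<in>S. A ** B \<in> S"
begin

lemma graph_walk_left_multiplier:
  assumes "(U, V) \<in> (graph_edges R)\<^sup>*" "mim M \<subseteq> mim U"
  shows "\<exists>D\<in>S \<union> {mat 1}. mker (D ** M) = mker M \<and> mim (D ** M) \<subseteq> mim V"
  using assms(1)
proof (induction rule: rtrancl_induct)
  case base
  show ?case using assms(2) by (intro bexI[of _ "mat 1"]) (simp_all add: matrix_mul_lid)
next
  case (step W V)
  then obtain D where D: "D \<in> S \<union> {mat 1}" "mker (D ** M) = mker M" "mim (D ** M) \<subseteq> mim W"
    by blast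
  have edge: "V \<in> R" "mker V \<inter> mim W = {0}"
    using step.hyps(2) by (auto simp: graph_edges_def)
  have "V ** D \<in> S \<union> {mat 1}"
    using mult_closed_insert_mat_1[OF S_closed _ D(1)] edge(1) R_subset by blast
  moreover have "mker (V ** D ** M) = mker M"
    using mker_mult_eq_if_trivial_intersection[OF edge(2) D(3)] D(2) by (simp add: matrix_mul_assoc)
  moreover have "mim (V ** D ** M) \<subseteq> mim V"
    unfolding matrix_mul_assoc[symmetric] by (rule mim_mult_subset)
  ultimately show ?case by blast
qed

lemma graph_walk_right_multiplier:
  assumes "(U, V) \<in> (graph_edges R)\<^sup>*" "U \<in> S"
  shows "\<exists>C\<in>S \<union> {mat 1}. mker (V ** C) = mker U"
  using assms(1)
proof (cases rule: rtranclE)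
  case base
  then show ?thesis by (intro bexI[of _ "mat 1"]) (simp_all add: matrix_mul_rid)
next
  case (step W)
  then obtain D where D: "D \<in> S \<union> {mat 1}" "mker (D ** U) = mker U" "mim (D ** U) \<subseteq> mim W"
    using graph_walk_left_multiplier[OF step(1) order_refl] by blast
  have "mker V \<inter> mim W = {0}"
    using step(2) by (simp add: graph_edges_def)
  then have "mker (V ** (D ** U)) = mker U"
    using mker_mult_eq_if_trivial_intersection[OF _ D(3)] D(2) by simp
  moreover have "D ** U \<in> S \<union> {mat 1}"
    using mult_closed_insert_mat_1[OF S_closed D(1)] assms(2) by simp
  ultimately show ?thesis by blast
qed

lemma same_scc_mpar_product:
  assumes "same_scc R A B"
  shows "\<exists>C\<in>S \<union> {mat 1}. \<exists>D\<in>S \<union> {mat 1}. mpar B (D ** A ** C)"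
proof -
  have walks: "(B, A) \<in> (graph_edges R)\<^sup>*" "(A, B) \<in> (graph_edges R)\<^sup>*" and "B \<in> S"
    using assms R_subset by (auto simp: same_scc_def)
  obtain C where C: "C \<in> S \<union> {mat 1}" "mker (A ** C) = mker B"
    using graph_walk_right_multiplier[OF walks(1) \<open>B \<in> S\<close>] by blast
  obtain D where D: "D \<in> S \<union> {mat 1}" "mker (D ** (A ** C)) = mker (A ** C)"
    "mim (D ** (A ** C)) \<subseteq> mim B"
    using graph_walk_left_multiplier[OF walks(2) mim_mult_subset[of A C]] by blast
  have "mker (D ** A ** C) = mker B"
    using C(2) D(2) by (simp add: matrix_mul_assoc)
  moreover have "mim (D ** A ** C) = mim B"
    using mim_eq_if_mker_eq[OF calculation] D(3) by (simp add: matrix_mul_assoc)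
  ultimately show ?thesis
    using C(1) D(1) unfolding mpar_def by blast
qed

end

lemma same_scc_sim_S:
  assumes "same_scc R A B" "R \<subseteq> gen_semigroup X"
  shows "sim_S (gen_semigroup X) A B"
proof -
  have closed: "\<forall>A\<in>gen_semigroup X. \<forall>B\<in>gen_semigroup X. A ** B \<in> gen_semigroup X"
    by (blast intro: gen_semigroup.mult)
  have "same_scc R B A" "A \<in> gen_semigroup X" "B \<in> gen_semigroup X"
    using assms by (auto simp: same_scc_def)
  then show ?thesis
    using same_scc_mpar_product[OF assms(2) closed] assms(1) unfolding sim_S_def by blast
qed

section \<open>Alternating forms\<close>

definition merge_rows :: "'n set \<Rightarrow> ('n \<Rightarrow> 'a^'n) \<Rightarrow> ('n \<Rightarrow> 'a^'n) \<Rightarrow> 'a^'n^'n" where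
  "merge_rows J x w = (\<chi> i. if i \<in> J then x i else w i)"

lemma row_merge_rows: "row i (merge_rows J x w) = (if i \<in> J then x i else w i)"
  by (simp add: row_def merge_rows_def vec_lambda_eta)

lemma merge_rows_upd:
  "t \<in> J \<Longrightarrow> merge_rows J (x(t := v)) w = (\<chi> i. if i = t then v else if i \<in> J then x i else w i)"
  by (auto simp: merge_rows_def vec_eq_iff)

text \<open>Antisymmetry under permutations of the slots in \<open>J\<close> follows from the other axioms; it is
  assumed outright to spare that derivation.\<close>
locale alternating_form =
  fixes J :: "'n::finite set" and f :: "('n \<Rightarrow> 'a::field^'n) \<Rightarrow> 'a"
  assumes depends_on_J: "(\<And>j. j \<in> J \<Longrightarrow> x j = y j) \<Longrightarrow> f x = f y"
    and additive: "t \<in> J \<Longrightarrow> f (x(t := a + b)) = f (x(t := a)) + f (x(t := b))"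
    and homogeneous: "t \<in> J \<Longrightarrow> f (x(t := c *s a)) = c * f (x(t := a))"
    and eq_0_if_repeated: "i \<in> J \<Longrightarrow> j \<in> J \<Longrightarrow> i \<noteq> j \<Longrightarrow> x i = x j \<Longrightarrow> f x = 0"
    and permute: "p permutes J \<Longrightarrow> f (x \<circ> p) = of_int (sign p) * f x"

lemma alternating_form_det_merge_rows:
  fixes w :: "'n::finite \<Rightarrow> 'a::field^'n"
  shows "alternating_form J (\<lambda>x. det (merge_rows J x w))"
proof
  fix x y :: "'n \<Rightarrow> 'a^'n" assume "\<And>j. j \<in> J \<Longrightarrow> x j = y j"
  then have "merge_rows J x w = merge_rows J y w"
    by (simp add: merge_rows_def vec_eq_iff)
  then show "det (merge_rows J x w) = det (merge_rows J y w)"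
    by simp
next
  fix x :: "'n \<Rightarrow> 'a^'n" and t a b assume "t \<in> J"
  then show "det (merge_rows J (x(t := a + b)) w) =
      det (merge_rows J (x(t := a)) w) + det (merge_rows J (x(t := b)) w)"
    unfolding merge_rows_upd[OF \<open>t \<in> J\<close>]
    using det_row_add[of t "\<lambda>_. a" "\<lambda>_. b" "\<lambda>i. if i \<in> J then x i else w i"] by simp
next
  fix x :: "'n \<Rightarrow> 'a^'n" and t c a assume "t \<in> J"
  then show "det (merge_rows J (x(t := c *s a)) w) = c * det (merge_rows J (x(t := a)) w)"
    unfolding merge_rows_upd[OF \<open>t \<in> J\<close>]
    using det_row_mul[of t c "\<lambda>_. a" "\<lambda>i. if i \<in> J then x i else w i"] by simp
next
  fix x :: "'n \<Rightarrow> 'a^'n" and i j assume "i \<in> J" "j \<in> J" "i \<noteq> j" "x i = x j"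
  then show "det (merge_rows J x w) = 0"
    by (intro det_identical_rows[of i j]) (simp_all add: row_merge_rows)
next
  fix x :: "'n \<Rightarrow> 'a^'n" and p assume p: "p permutes J"
  have "merge_rows J (x \<circ> p) w = (\<chi> i. merge_rows J x w $ p i)"
    using p by (auto simp: merge_rows_def vec_eq_iff permutes_in_image permutes_not_in)
  then show "det (merge_rows J (x \<circ> p) w) = of_int (sign p) * det (merge_rows J x w)"
    using det_permute_rows[OF permutes_subset[OF p subset_UNIV]] by simp
qed

lemma alternating_form_lincomb:
  fixes g :: "'i \<Rightarrow> ('n::finite \<Rightarrow> 'a::field^'n) \<Rightarrow> 'a"
  assumes alt: "\<And>A. A \<in> T \<Longrightarrow> alternating_form J (g A)"
  shows "alternating_form J (\<lambda>x. \<Sum>A\<in>T. c A * g A x)"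
proof
  fix x y :: "'n \<Rightarrow> 'a^'n" assume "\<And>j. j \<in> J \<Longrightarrow> x j = y j"
  then have "g A x = g A y" if "A \<in> T" for A
    by (rule alternating_form.depends_on_J[OF alt[OF that]])
  then show "(\<Sum>A\<in>T. c A * g A x) = (\<Sum>A\<in>T. c A * g A y)"
    by (intro sum.cong) simp_all
next
  fix x :: "'n \<Rightarrow> 'a^'n" and t a b assume "t \<in> J"
  then have "c A * g A (x(t := a + b)) = c A * g A (x(t := a)) + c A * g A (x(t := b))"
    if "A \<in> T" for A
    using alternating_form.additive[OF alt[OF that]] by (simp add: distrib_left)
  then show "(\<Sum>A\<in>T. c A * g A (x(t := a + b))) =
      (\<Sum>A\<in>T. c A * g A (x(t := a))) + (\<Sum>A\<in>T. c A * g A (x(t := b)))"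
    unfolding sum.distrib[symmetric] by (intro sum.cong) simp_all
next
  fix x :: "'n \<Rightarrow> 'a^'n" and t d a assume "t \<in> J"
  then have "c A * g A (x(t := d *s a)) = d * (c A * g A (x(t := a)))" if "A \<in> T" for A
    using alternating_form.homogeneous[OF alt[OF that]] by simp
  then show "(\<Sum>A\<in>T. c A * g A (x(t := d *s a))) = d * (\<Sum>A\<in>T. c A * g A (x(t := a)))"
    unfolding sum_distrib_left by (intro sum.cong) simp_all
next
  fix x :: "'n \<Rightarrow> 'a^'n" and i j assume "i \<in> J" "j \<in> J" "i \<noteq> j" "x i = x j"
  then have "g A x = 0" if "A \<in> T" for A
    using alternating_form.eq_0_if_repeated[OF alt[OF that]] by blast
  then show "(\<Sum>A\<in>T. c A * g A x) = 0"
    by (intro sum.neutral) simp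
next
  fix x :: "'n \<Rightarrow> 'a^'n" and p assume "p permutes J"
  then have "c A * g A (x \<circ> p) = of_int (sign p) * (c A * g A x)" if "A \<in> T" for A
    using alternating_form.permute[OF alt[OF that]] by simp
  then show "(\<Sum>A\<in>T. c A * g A (x \<circ> p)) = of_int (sign p) * (\<Sum>A\<in>T. c A * g A x)"
    unfolding sum_distrib_left by (intro sum.cong) simp_all
qed

lemma (in alternating_form) update_sum:
  assumes "t \<in> J" "finite I"
  shows "f (x(t := \<Sum>i\<in>I. c i *s v i)) = (\<Sum>i\<in>I. c i * f (x(t := v i)))"
  using assms(2)
proof (induction I rule: finite_induct)
  case empty
  have "f (x(t := 0)) = f (x(t := 0 *s 0))" by simp
  also have "\<dots> = 0" using homogeneous[OF assms(1), of x 0 0] by simp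
  finally show ?case by (simp only: sum.empty)
next
  case (insert i I)
  have "f (x(t := \<Sum>i\<in>insert i I. c i *s v i)) = f (x(t := c i *s v i + (\<Sum>i\<in>I. c i *s v i)))"
    by (simp only: sum.insert[OF insert.hyps])
  also have "\<dots> = c i * f (x(t := v i)) + (\<Sum>i\<in>I. c i * f (x(t := v i)))"
    by (simp only: additive[OF assms(1)] homogeneous[OF assms(1)] insert.IH)
  also have "\<dots> = (\<Sum>i\<in>insert i I. c i * f (x(t := v i)))"
    by (simp only: sum.insert[OF insert.hyps])
  finally show ?case .
qed

definition axis_tuple :: "'n set \<Rightarrow> 'n set \<Rightarrow> 'n \<Rightarrow> 'a::zero_neq_one^'n" where
  "axis_tuple J S = (\<lambda>j. axis ((SOME k. bij_betw k J S) j) 1)"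

lemma (in alternating_form) eq_0_on_axes:
  assumes zero: "\<And>S. card S = card J \<Longrightarrow> f (axis_tuple J S) = 0"
  shows "f (\<lambda>j. axis (k j) 1) = 0"
proof (cases "inj_on k J")
  case False
  then obtain i j where "i \<in> J" "j \<in> J" "i \<noteq> j" "k i = k j"
    by (auto simp: inj_on_def)
  then show ?thesis using eq_0_if_repeated[of i j "\<lambda>j. axis (k j) 1"] by simp
next
  case True
  define S where "S = k ` J"
  define g where "g = (SOME h. bij_betw h J S)"
  have "bij_betw k J S" using True by (simp add: S_def inj_on_imp_bij_betw)
  then have g: "bij_betw g J S"
    unfolding g_def by (metis someI_ex)
  define p where "p j = (if j \<in> J then inv_into J g (k j) else j)" for j
  have "bij_betw (inv_into J g \<circ> k) J J"
    using \<open>bij_betw k J S\<close> bij_betw_inv_into[OF g] by (rule bij_betw_trans)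
  then have "bij_betw p J J"
    by (rule bij_betw_cong[THEN iffD1, rotated]) (simp add: p_def)
  then have p: "p permutes J"
    by (rule bij_imp_permutes) (simp add: p_def)
  have "k j = g (p j)" if "j \<in> J" for j
    using that g by (simp add: p_def S_def bij_betw_def f_inv_into_f)
  then have "f (\<lambda>j. axis (k j) 1) = f (axis_tuple J S \<circ> p)"
    by (intro depends_on_J) (simp add: axis_tuple_def g_def)
  also have "\<dots> = 0"
    using permute[OF p] zero[of S] \<open>bij_betw k J S\<close> by (simp add: bij_betw_same_card)
  finally show ?thesis .
qed

lemma (in alternating_form) eq_0_if_eq_0_on_axes:
  assumes zero: "\<And>k. f (\<lambda>j. axis (k j) 1) = 0"
  shows "f x = 0"
proof -
  have "finite T \<Longrightarrow> T \<subseteq> J \<Longrightarrow> \<forall>x. (\<forall>j\<in>J - T. \<exists>i. x j = axis i 1) \<longrightarrow> f x = 0" for T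
  proof (induction T rule: finite_induct)
    case empty
    show ?case
    proof (intro allI impI)
      fix x :: "'n \<Rightarrow> 'a^'n" assume "\<forall>j\<in>J - {}. \<exists>i. x j = axis i 1"
      then obtain k where "\<And>j. j \<in> J \<Longrightarrow> x j = axis (k j) 1"
        using bchoice[of J "\<lambda>j i. x j = axis i 1"] by auto
      then have "f x = f (\<lambda>j. axis (k j) 1)" by (rule depends_on_J)
      then show "f x = 0" using zero by simp
    qed
  next
    case (insert t T)
    show ?case
    proof (intro allI impI)
      fix x :: "'n \<Rightarrow> 'a^'n" assume x: "\<forall>j\<in>J - insert t T. \<exists>i. x j = axis i 1"
      have "t \<in> J" using insert.prems by simp
      have "f x = f (x(t := \<Sum>i\<in>UNIV. (x t $ i) *s axis i 1))"
        by (simp only: basis_expansion fun_upd_triv)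
      also have "\<dots> = (\<Sum>i\<in>UNIV. (x t $ i) * f (x(t := axis i 1)))"
        by (rule update_sum[OF \<open>t \<in> J\<close> finite])
      also have "\<dots> = 0"
      proof (intro sum.neutral ballI)
        fix i
        have "\<forall>j\<in>J - T. \<exists>i'. (x(t := axis i 1)) j = axis i' 1"
          using x by auto
        moreover have "T \<subseteq> J" using insert.prems by simp
        ultimately have "f (x(t := axis i 1)) = 0"
          using insert.IH by blast
        then show "x t $ i * f (x(t := axis i 1)) = 0" by simp
      qed
      finally show "f x = 0" .
    qed
  qed
  from this[of J] show ?thesis by simp
qed

text \<open>The coordinates of \<open>f\<close> in the \<open>card J\<close>-th exterior power: its values on the tuples of
  standard basis vectors indexed by the subsets \<open>S\<close> of size \<open>card J\<close>, each listed in the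
  arbitrary order chosen by \<open>axis_tuple\<close>.\<close>
definition pluecker :: "'n::finite set \<Rightarrow> (('n \<Rightarrow> 'a::field^'n) \<Rightarrow> 'a) \<Rightarrow> 'a^('n set)" where
  "pluecker J f = (\<chi> S. if card S = card J then f (axis_tuple J S) else 0)"

lemma (in alternating_form) eq_0_if_pluecker_eq_0:
  assumes "pluecker J f = 0"
  shows "f x = 0"
proof (rule eq_0_if_eq_0_on_axes[OF eq_0_on_axes])
  fix S :: "'n set" assume "card S = card J"
  then show "f (axis_tuple J S) = 0"
    using arg_cong[OF assms, of "\<lambda>v. v $ S"] by (simp add: pluecker_def)
qed

lemma pluecker_lincomb:
  "pluecker J (\<lambda>x. \<Sum>A\<in>T. c A * g A x) = (\<Sum>A\<in>T. c A *s pluecker J (g A))"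
  by (simp add: vec_eq_iff pluecker_def sum_component)

lemma pluecker_in_span: "pluecker J f \<in> vec.span ((\<lambda>S. axis S 1) ` {S. card S = card J})"
proof -
  have "(pluecker J f $ S) *s axis S 1 \<in> vec.span ((\<lambda>S. axis S 1) ` {S. card S = card J})" for S
    by (cases "card S = card J")
      (auto simp: pluecker_def vec.span_zero intro: vec.span_scale vec.span_base)
  then have "(\<Sum>S\<in>UNIV. (pluecker J f $ S) *s axis S 1) \<in> vec.span ((\<lambda>S. axis S 1) ` {S. card S = card J})"
    by (intro vec.span_sum)
  then show ?thesis by (simp only: basis_expansion)
qed

lemma card_axes_of_subsets_le:
  "card ((\<lambda>S. axis S (1::'a::field)) ` {S::'n::finite set. card S = r}) \<le> CARD('n) choose r"
  using card_image_le[of "{S::'n set. card S = r}" "\<lambda>S. axis S (1::'a)"] n_subsets[of "UNIV::'n set" r]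
  by simp

lemma lincomb_eq_0_if_triangular:
  fixes g :: "'i \<Rightarrow> 'x \<Rightarrow> 'a::field" and p :: "'i \<Rightarrow> 'x"
  assumes "finite T"
    and diag: "\<And>A. A \<in> T \<Longrightarrow> g A (p A) \<noteq> 0"
    and sink: "\<And>T'. T' \<subseteq> T \<Longrightarrow> T' \<noteq> {} \<Longrightarrow> \<exists>B\<in>T'. \<forall>A\<in>T' - {B}. g A (p B) = 0"
    and zero: "\<And>x. (\<Sum>A\<in>T. c A * g A x) = 0"
    and "A \<in> T"
  shows "c A = 0"
proof (rule ccontr)
  define T' where "T' = {A \<in> T. c A \<noteq> 0}"
  assume "c A \<noteq> 0"
  then have "T' \<noteq> {}" using \<open>A \<in> T\<close> by (auto simp: T'_def)
  then obtain B where B: "B \<in> T'" and B_sink: "\<forall>A\<in>T' - {B}. g A (p B) = 0"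
    using sink[of T'] by (auto simp: T'_def)
  have "c A' * g A' (p B) = 0" if "A' \<in> T - {B}" for A'
    using that B_sink by (cases "c A' = 0") (auto simp: T'_def)
  then have "(\<Sum>A\<in>T - {B}. c A * g A (p B)) = 0"
    by (rule sum.neutral[rule_format])
  then have "(\<Sum>A\<in>T. c A * g A (p B)) = c B * g B (p B)"
    using sum.remove[OF \<open>finite T\<close>, of B "\<lambda>A. c A * g A (p B)"] B by (simp add: T'_def)
  then show False
    using zero[of "p B"] diag[of B] B by (simp add: T'_def)
qed

lemma pluecker_lincomb_eq_0_imp_coeff_eq_0:
  fixes F :: "'i \<Rightarrow> ('n::finite \<Rightarrow> 'a::field^'n) \<Rightarrow> 'a" and p :: "'i \<Rightarrow> 'n \<Rightarrow> 'a^'n"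
  assumes "finite T"
    and alt: "\<And>A. A \<in> T \<Longrightarrow> alternating_form J (F A)"
    and diag: "\<And>A. A \<in> T \<Longrightarrow> F A (p A) \<noteq> 0"
    and sink: "\<And>T'. T' \<subseteq> T \<Longrightarrow> T' \<noteq> {} \<Longrightarrow> \<exists>B\<in>T'. \<forall>A\<in>T' - {B}. F A (p B) = 0"
    and lincomb: "(\<Sum>A\<in>T. c A *s pluecker J (F A)) = 0"
    and "A \<in> T"
  shows "c A = 0"
proof (rule lincomb_eq_0_if_triangular[of T F p])
  have "alternating_form J (\<lambda>x. \<Sum>A\<in>T. c A * F A x)"
    using alt by (rule alternating_form_lincomb)
  moreover have "pluecker J (\<lambda>x. \<Sum>A\<in>T. c A * F A x) = 0"
    using lincomb by (simp add: pluecker_lincomb)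
  ultimately show "(\<Sum>A\<in>T. c A * F A x) = 0" for x
    by (rule alternating_form.eq_0_if_pluecker_eq_0)
qed (use assms in auto)

lemma inj_on_independent_if_coeffs_eq_0:
  fixes \<Phi> :: "'i \<Rightarrow> 'a::field^'m"
  assumes "finite T"
    and coeff_0: "\<And>T0 c A. T0 \<subseteq> T \<Longrightarrow> (\<Sum>A\<in>T0. c A *s \<Phi> A) = 0 \<Longrightarrow> A \<in> T0 \<Longrightarrow> c A = 0"
  shows "inj_on \<Phi> T" and "vec.independent (\<Phi> ` T)"
proof -
  show inj: "inj_on \<Phi> T"
  proof (rule inj_onI, rule ccontr)
    fix A1 A2 assume A: "A1 \<in> T" "A2 \<in> T" "\<Phi> A1 = \<Phi> A2" "A1 \<noteq> A2"
    then have "(\<Sum>A\<in>{A1, A2}. (if A = A1 then 1 else -1) *s \<Phi> A) = 0"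
      by simp
    then have "(if A1 = A1 then 1 else -1) = (0::'a)"
      by (rule coeff_0[of "{A1, A2}" "\<lambda>A. if A = A1 then 1 else -1" A1, rotated]) (use A in auto)
    then show False by simp
  qed
  show "vec.independent (\<Phi> ` T)"
    unfolding vec.independent_explicit
  proof (intro conjI allI impI ballI)
    show "finite (\<Phi> ` T)" using \<open>finite T\<close> by simp
    fix u v assume lincomb: "(\<Sum>v\<in>\<Phi> ` T. u v *s v) = 0" and "v \<in> \<Phi> ` T"
    then obtain A where "A \<in> T" "v = \<Phi> A" by blast
    have "(\<Sum>A\<in>T. u (\<Phi> A) *s \<Phi> A) = 0"
      using lincomb sum.reindex[OF inj, of "\<lambda>v. u v *s v"] by (simp add: comp_def)
    then have "u (\<Phi> A) = 0"
      by (rule coeff_0[OF order_refl _ \<open>A \<in> T\<close>])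
    then show "u v = 0" using \<open>v = \<Phi> A\<close> by simp
  qed
qed

lemma card_le_choose_if_triangular_alternating:
  fixes F :: "'i \<Rightarrow> ('n::finite \<Rightarrow> 'a::field^'n) \<Rightarrow> 'a" and p :: "'i \<Rightarrow> 'n \<Rightarrow> 'a^'n"
  assumes "finite T"
    and alt: "\<And>A. A \<in> T \<Longrightarrow> alternating_form J (F A)"
    and diag: "\<And>A. A \<in> T \<Longrightarrow> F A (p A) \<noteq> 0"
    and sink: "\<And>T'. T' \<subseteq> T \<Longrightarrow> T' \<noteq> {} \<Longrightarrow> \<exists>B\<in>T'. \<forall>A\<in>T' - {B}. F A (p B) = 0"
  shows "card T \<le> CARD('n) choose card J"
proof -
  define \<Phi> where "\<Phi> A = pluecker J (F A)" for A
  have "c A = 0" if T0: "T0 \<subseteq> T" and "(\<Sum>A\<in>T0. c A *s \<Phi> A) = 0" "A \<in> T0" for T0 c A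
  proof (rule pluecker_lincomb_eq_0_imp_coeff_eq_0[of T0 J F p])
    show "finite T0" using T0 \<open>finite T\<close> by (rule finite_subset)
    show "\<exists>B\<in>T'. \<forall>A\<in>T' - {B}. F A (p B) = 0" if "T' \<subseteq> T0" "T' \<noteq> {}" for T'
      using that T0 sink by blast
  qed (use that alt diag \<Phi>_def in auto)
  then have inj: "inj_on \<Phi> T" and indep: "vec.independent (\<Phi> ` T)"
    using inj_on_independent_if_coeffs_eq_0[OF \<open>finite T\<close>] by blast+
  have "\<Phi> ` T \<subseteq> vec.span ((\<lambda>S. axis S 1) ` {S. card S = card J})"
    unfolding \<Phi>_def using pluecker_in_span by blast
  then have "card (\<Phi> ` T) \<le> card ((\<lambda>S. axis S (1::'a)) ` {S::'n set. card S = card J})"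
    using vec.independent_span_bound[OF finite_imageI[OF finite] indep] by blast
  also have "\<dots> \<le> CARD('n) choose card J"
    by (rule card_axes_of_subsets_le)
  finally show ?thesis
    by (simp only: card_image[OF inj])
qed

section \<open>Determinants of complementary bases\<close>

definition indexed_basis :: "('a::field^'n) set \<Rightarrow> 'i set \<Rightarrow> ('i \<Rightarrow> 'a^'n) \<Rightarrow> bool" where
  "indexed_basis V I b \<longleftrightarrow> b ` I \<subseteq> V \<and> V \<subseteq> vec.span (b ` I) \<and> inj_on b I \<and>
     (\<forall>c. (\<Sum>i\<in>I. c i *s b i) = 0 \<longrightarrow> (\<forall>i\<in>I. c i = 0))"

lemma indexed_basis_exists:
  fixes V :: "('a::field^'n) set"
  assumes "vec.dim V = card I" "finite I"
  obtains b where "indexed_basis V I b"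
proof -
  obtain B where B: "B \<subseteq> V" "vec.independent B" "V \<subseteq> vec.span B" "card B = vec.dim V"
    using vec.basis_exists[of V] by metis
  have "finite B" using B(2) by (rule vec.finiteI_independent)
  then obtain b where b: "bij_betw b I B"
    using finite_same_card_bij[OF assms(2)] B(4) assms(1) by metis
  have "c i = 0" if "(\<Sum>i\<in>I. c i *s b i) = 0" "i \<in> I" for c i
  proof -
    have "(\<Sum>v\<in>B. c (inv_into I b v) *s v) = (\<Sum>i\<in>I. c i *s b i)"
      using sum.reindex_bij_betw[OF b, of "\<lambda>v. c (inv_into I b v) *s v"] b
      by (simp add: bij_betw_def)
    then have "c (inv_into I b v) = 0" if "v \<in> B" for v
      using B(2) \<open>(\<Sum>i\<in>I. c i *s b i) = 0\<close> that by (auto simp: vec.independent_explicit)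
    then show ?thesis
      using b \<open>i \<in> I\<close> by (metis bij_betw_apply bij_betw_imp_inj_on inv_into_f_f)
  qed
  then have "indexed_basis V I b"
    using B b by (auto simp: indexed_basis_def bij_betw_def)
  then show thesis by (rule that)
qed

lemma indexed_basis_lincomb:
  assumes "indexed_basis V I b" "finite I" "v \<in> V"
  obtains \<alpha> where "v = (\<Sum>i\<in>I. \<alpha> i *s b i)"
proof -
  have "v \<in> vec.span (b ` I)" and inj: "inj_on b I"
    using assms by (auto simp: indexed_basis_def)
  then obtain u where "v = (\<Sum>w\<in>b ` I. u w *s w)"
    using vec.span_finite[of "b ` I"] assms(2) by auto
  also have "\<dots> = (\<Sum>i\<in>I. u (b i) *s b i)"
    using sum.reindex[OF inj, of "\<lambda>w. u w *s w"] by simp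
  finally show thesis by (rule that)
qed

lemma det_nonzero_iff_rows_independent:
  fixes A :: "'a::field^'n^'n"
  shows "det A \<noteq> 0 \<longleftrightarrow> (\<forall>c. (\<Sum>i\<in>UNIV. c i *s row i A) = 0 \<longrightarrow> (\<forall>i. c i = 0))"
  by (simp add: invertible_det_nz[symmetric] invertible_right_inverse
      matrix_right_invertible_independent_rows)

lemma sum_rows_merge_rows:
  "(\<Sum>i\<in>UNIV. c i *s row i (merge_rows J x w)) = (\<Sum>i\<in>J. c i *s x i) + (\<Sum>i\<in>-J. c i *s w i)"
proof -
  have "(\<Sum>i\<in>UNIV. c i *s row i (merge_rows J x w)) =
      (\<Sum>i\<in>J. c i *s row i (merge_rows J x w)) + (\<Sum>i\<in>-J. c i *s row i (merge_rows J x w))"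
    using sum.subset_diff[of J UNIV] by (simp add: Compl_eq_Diff_UNIV add.commute)
  then show ?thesis
    by (simp add: row_merge_rows)
qed

lemma indexed_basis_coeffs_eq_0:
  "indexed_basis V I b \<Longrightarrow> (\<Sum>i\<in>I. c i *s b i) = 0 \<Longrightarrow> i \<in> I \<Longrightarrow> c i = 0"
  unfolding indexed_basis_def by blast

lemma indexed_basis_lincomb_in:
  "vec.subspace V \<Longrightarrow> indexed_basis V I b \<Longrightarrow> (\<Sum>i\<in>I. c i *s b i) \<in> V"
  unfolding indexed_basis_def by (intro vec.subspace_sum vec.subspace_scale) auto

lemma Int_eq_0_if_det_merge_rows_nonzero:
  fixes b w :: "'n::finite \<Rightarrow> 'a::field^'n"
  assumes "vec.subspace U" "vec.subspace W"
    and b: "indexed_basis U J b" and w: "indexed_basis W (-J) w"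
    and "det (merge_rows J b w) \<noteq> 0"
  shows "U \<inter> W = {0}"
proof -
  have rows_indep: "\<And>c i. (\<Sum>i\<in>J. c i *s b i) + (\<Sum>i\<in>-J. c i *s w i) = 0 \<Longrightarrow> c i = 0"
    using \<open>det (merge_rows J b w) \<noteq> 0\<close>
    unfolding det_nonzero_iff_rows_independent sum_rows_merge_rows by blast
  have "v = 0" if "v \<in> U" "v \<in> W" for v
  proof -
    obtain \<alpha> where \<alpha>: "v = (\<Sum>i\<in>J. \<alpha> i *s b i)"
      using indexed_basis_lincomb[OF b finite \<open>v \<in> U\<close>] .
    obtain \<beta> where \<beta>: "v = (\<Sum>i\<in>-J. \<beta> i *s w i)"
      using indexed_basis_lincomb[OF w finite \<open>v \<in> W\<close>] .
    define c where "c i = (if i \<in> J then \<alpha> i else - \<beta> i)" for i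
    have "(\<Sum>i\<in>J. c i *s b i) = v"
      unfolding \<alpha> by (intro sum.cong) (simp_all add: c_def)
    moreover have "(\<Sum>i\<in>-J. c i *s w i) = (\<Sum>i\<in>-J. - (\<beta> i *s w i))"
      by (intro sum.cong) (simp_all add: c_def)
    then have "(\<Sum>i\<in>-J. c i *s w i) = - v"
      unfolding \<beta> by (simp only: sum_negf)
    ultimately have "(\<Sum>i\<in>J. c i *s b i) + (\<Sum>i\<in>-J. c i *s w i) = 0"
      by simp
    then have c_0: "c i = 0" for i
      by (rule rows_indep)
    have "\<alpha> i *s b i = 0" if "i \<in> J" for i
      using c_0[of i] that by (simp add: c_def)
    then show "v = 0"
      unfolding \<alpha> by (rule sum.neutral[rule_format])
  qed
  then show ?thesis
    using vec.subspace_0[OF assms(1)] vec.subspace_0[OF assms(2)] by auto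
qed

lemma det_merge_rows_nonzero_if_Int_eq_0:
  fixes b w :: "'n::finite \<Rightarrow> 'a::field^'n"
  assumes U: "vec.subspace U" and W: "vec.subspace W"
    and b: "indexed_basis U J b" and w: "indexed_basis W (-J) w"
    and UW: "U \<inter> W = {0}"
  shows "det (merge_rows J b w) \<noteq> 0"
proof -
  have "c i = 0" if lincomb: "(\<Sum>i\<in>J. c i *s b i) + (\<Sum>i\<in>-J. c i *s w i) = 0" for c i
  proof -
    let ?u = "\<Sum>i\<in>J. c i *s b i" and ?z = "\<Sum>i\<in>-J. c i *s w i"
    have "?u = - ?z" using lincomb by (simp add: eq_neg_iff_add_eq_0)
    then have "?u \<in> W"
      using vec.subspace_neg[OF W indexed_basis_lincomb_in[OF W w]] by simp
    with indexed_basis_lincomb_in[OF U b] have "?u = 0" using UW by blast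
    moreover from this have "?z = 0" using lincomb by simp
    ultimately show "c i = 0"
      using indexed_basis_coeffs_eq_0[OF b] indexed_basis_coeffs_eq_0[OF w] by (cases "i \<in> J") auto
  qed
  then show ?thesis
    unfolding det_nonzero_iff_rows_independent sum_rows_merge_rows by blast
qed

section \<open>Counting strongly connected components\<close>

lemma card_le_choose_if_sink:
  fixes T :: "('a::field^'n^'n) set"
  assumes "finite T"
    and rank: "\<And>A. A \<in> T \<Longrightarrow> rank A = r"
    and regular: "\<And>A. A \<in> T \<Longrightarrow> mker A \<inter> mim A = {0}"
    and sink: "\<And>T'. T' \<subseteq> T \<Longrightarrow> T' \<noteq> {} \<Longrightarrow> \<exists>B\<in>T'. \<forall>A\<in>T' - {B}. mker A \<inter> mim B \<noteq> {0}"
  shows "card T \<le> CARD('n) choose r"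
proof (cases "T = {}")
  case False
  then obtain A0 where "A0 \<in> T" by blast
  then have "r \<le> CARD('n)"
    using rank dim_subset_UNIV_cart_gen by (metis rank_eq_dim_mim)
  then obtain J :: "'n set" where J: "card J = r"
    using obtain_subset_with_card_n[of r "UNIV :: 'n set"] by auto
  have dim_mim: "vec.dim (mim A) = card J" if "A \<in> T" for A
    using rank[OF that] J by (simp add: rank_eq_dim_mim)
  have dim_mker: "vec.dim (mker A) = card (-J)" if "A \<in> T" for A
    using dim_mim_add_dim_mker[of A] dim_mim[OF that]
    by (simp add: Compl_eq_Diff_UNIV card_Diff_subset)
  have "\<forall>A\<in>T. \<exists>b. indexed_basis (mim A) J b"
    using indexed_basis_exists[OF dim_mim finite] by blast
  then obtain bb where bb: "\<And>A. A \<in> T \<Longrightarrow> indexed_basis (mim A) J (bb A)"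
    by (metis bchoice)
  have "\<forall>A\<in>T. \<exists>w. indexed_basis (mker A) (-J) w"
    using indexed_basis_exists[OF dim_mker finite] by blast
  then obtain ww where ww: "\<And>A. A \<in> T \<Longrightarrow> indexed_basis (mker A) (-J) (ww A)"
    by (metis bchoice)
  define F where "F A x = det (merge_rows J x (ww A))" for A x
  have F_nonzero_iff: "F A (bb B) \<noteq> 0 \<longleftrightarrow> mim B \<inter> mker A = {0}" if "A \<in> T" "B \<in> T" for A B
    unfolding F_def
    using Int_eq_0_if_det_merge_rows_nonzero[OF subspace_mim subspace_mker bb[OF that(2)] ww[OF that(1)]]
      det_merge_rows_nonzero_if_Int_eq_0[OF subspace_mim subspace_mker bb[OF that(2)] ww[OF that(1)]]
    by blast
  have "card T \<le> CARD('n) choose card J"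
  proof (rule card_le_choose_if_triangular_alternating[where F = F and p = bb])
    show "alternating_form J (F A)" for A
      unfolding F_def by (rule alternating_form_det_merge_rows)
    show "F A (bb A) \<noteq> 0" if "A \<in> T" for A
      using F_nonzero_iff[OF that that] regular[OF that] by (simp add: Int_commute)
    show "\<exists>B\<in>T'. \<forall>A\<in>T' - {B}. F A (bb B) = 0" if "T' \<subseteq> T" "T' \<noteq> {}" for T'
      using sink[OF that] F_nonzero_iff that(1) by (metis Diff_iff Int_commute subsetD)
  qed fact
  then show ?thesis using J by simp
qed simp

lemma completely_pseudo_regular_mker_Int_mim:
  fixes C :: "'a::field^'n^'n"
  assumes "completely_pseudo_regular C"
  shows "mker C \<inter> mim C = {0}"
proof -
  obtain G E where "C \<in> G"
    and group: "\<forall>A\<in>G. E ** A = A \<and> A ** E = A \<and> (\<exists>A'\<in>G. A ** A' = E \<and> A' ** A = E)"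
    using assms unfolding completely_pseudo_regular_def by blast
  then obtain C' where "C' ** C = E" "E ** C = C"
    by blast
  then have "C' ** C ** C = C" by simp
  have "v = 0" if "C *v v = 0" "v = C *v x" for v x
  proof -
    have "v = (C' ** C ** C) *v x" using \<open>C' ** C ** C = C\<close> that(2) by simp
    also have "\<dots> = C' *v (C *v v)" using that(2) by (metis matrix_vector_mul_assoc)
    finally show ?thesis using that(1) by simp
  qed
  moreover have "0 \<in> mim C" using mult_in_mim[of C 0] by simp
  ultimately show ?thesis by (auto simp: mim_def)
qed

lemma finite_rtrancl_sink:
  assumes "finite T" "T \<noteq> {}"
    and antisym: "\<And>A B. A \<in> T \<Longrightarrow> B \<in> T \<Longrightarrow> (A, B) \<in> E\<^sup>* \<Longrightarrow> (B, A) \<in> E\<^sup>* \<Longrightarrow> A = B"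
  obtains B where "B \<in> T" "\<And>A. A \<in> T \<Longrightarrow> (B, A) \<in> E\<^sup>* \<Longrightarrow> A = B"
proof -
  define reach where "reach X = {A \<in> T. (X, A) \<in> E\<^sup>*}" for X
  obtain B where B: "B \<in> T" and B_min: "\<And>X. X \<in> T \<Longrightarrow> card (reach B) \<le> card (reach X)"
    using ex_has_least_nat[of "\<lambda>X. X \<in> T" _ "\<lambda>X. card (reach X)"] \<open>T \<noteq> {}\<close> by blast
  have "A = B" if "A \<in> T" "(B, A) \<in> E\<^sup>*" for A
  proof (rule ccontr)
    assume "A \<noteq> B"
    then have "B \<notin> reach A" using antisym that B by (auto simp: reach_def)
    moreover have "reach A \<subseteq> reach B" using that(2) by (auto simp: reach_def)
    moreover have "B \<in> reach B" using B by (simp add: reach_def)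
    ultimately have "card (reach A) < card (reach B)"
      using \<open>finite T\<close> by (intro psubset_card_mono) (auto simp: reach_def)
    then show False using B_min[OF that(1)] by simp
  qed
  with B show thesis by (rule that)
qed

lemma sink_if_distinct_sccs:
  assumes "finite T" "T \<subseteq> R"
    and distinct: "\<And>A B. A \<in> T \<Longrightarrow> B \<in> T \<Longrightarrow> same_scc R A B \<Longrightarrow> A = B"
    and "T' \<subseteq> T" "T' \<noteq> {}"
  shows "\<exists>B\<in>T'. \<forall>A\<in>T' - {B}. mker A \<inter> mim B \<noteq> {0}"
proof -
  have "finite T'" using \<open>T' \<subseteq> T\<close> \<open>finite T\<close> by (rule finite_subset)
  have "A = B" if "A \<in> T'" "B \<in> T'" "(A, B) \<in> (graph_edges R)\<^sup>*" "(B, A) \<in> (graph_edges R)\<^sup>*"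
    for A B
    using distinct that assms(2,4) by (auto simp: same_scc_def)
  then obtain B where B: "B \<in> T'"
    and sink: "\<And>A. A \<in> T' \<Longrightarrow> (B, A) \<in> (graph_edges R)\<^sup>* \<Longrightarrow> A = B"
    using finite_rtrancl_sink[OF \<open>finite T'\<close> \<open>T' \<noteq> {}\<close>] by blast
  have "mker A \<inter> mim B \<noteq> {0}" if "A \<in> T' - {B}" for A
  proof
    assume "mker A \<inter> mim B = {0}"
    then have "(B, A) \<in> graph_edges R"
      using that B assms(2,4) by (auto simp: graph_edges_def)
    then show False using sink that by blast
  qed
  with B show ?thesis by blast
qed

lemma sccs_representatives:
  fixes R :: "('a::field^'n^'n) set"
  obtains rep where "\<And>C. C \<in> sccs R \<Longrightarrow> rep C \<in> C" "\<And>C. C \<in> sccs R \<Longrightarrow> rep C \<in> R"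
    "\<And>C1 C2. C1 \<in> sccs R \<Longrightarrow> C2 \<in> sccs R \<Longrightarrow> same_scc R (rep C1) (rep C2) \<Longrightarrow> C1 = C2"
proof
  have equiv: "equiv R {(A, B). same_scc R A B}"
    unfolding equiv_def refl_on_def sym_def trans_def same_scc_def
    by (auto intro: rtrancl_trans)
  define rep where "rep C = (SOME A. A \<in> C)" for C :: "('a^'n^'n) set"
  show rep: "rep C \<in> C" if "C \<in> sccs R" for C
    using in_quotient_imp_non_empty[OF equiv] that by (simp add: sccs_def rep_def some_in_eq)
  show "rep C \<in> R" if "C \<in> sccs R" for C
    using in_quotient_imp_subset[OF equiv] that rep[OF that] by (auto simp: sccs_def)
  show "C1 = C2" if "C1 \<in> sccs R" "C2 \<in> sccs R" "same_scc R (rep C1) (rep C2)" for C1 C2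
    using quotient_eq_iff[OF equiv _ _ rep[OF that(1)] rep[OF that(2)]] that
    by (simp add: sccs_def)
qed

lemma card_sccs_of_rank_le:
  fixes R :: "('a::field^'n^'n) set"
  assumes cpr: "\<forall>C\<in>R. completely_pseudo_regular C"
    and CC: "CC \<subseteq> {C \<in> sccs R. \<forall>A\<in>C. rank A = r}" and "finite CC"
  shows "card CC \<le> CARD('n) choose r"
proof -
  obtain rep where rep: "\<And>C. C \<in> sccs R \<Longrightarrow> rep C \<in> C"
    and rep_R: "\<And>C. C \<in> sccs R \<Longrightarrow> rep C \<in> R"
    and rep_eq: "\<And>C1 C2. C1 \<in> sccs R \<Longrightarrow> C2 \<in> sccs R \<Longrightarrow> same_scc R (rep C1) (rep C2) \<Longrightarrow> C1 = C2"
    using sccs_representatives[of R] by blast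
  have sccs: "C \<in> sccs R" if "C \<in> CC" for C
    using CC that by blast
  have distinct: "A = B" if AB: "A \<in> rep ` CC" "B \<in> rep ` CC" and "same_scc R A B" for A B
  proof -
    obtain C1 C2 where C: "C1 \<in> CC" "C2 \<in> CC" and "A = rep C1" "B = rep C2"
      using AB by blast
    then have "same_scc R (rep C1) (rep C2)" using \<open>same_scc R A B\<close> by simp
    with sccs[OF C(1)] sccs[OF C(2)] have "C1 = C2" by (rule rep_eq)
    with \<open>A = rep C1\<close> \<open>B = rep C2\<close> show "A = B" by simp
  qed
  have "inj_on rep CC"
  proof (rule inj_onI)
    fix C1 C2 assume C: "C1 \<in> CC" "C2 \<in> CC" and "rep C1 = rep C2"
    then have "same_scc R (rep C1) (rep C2)"
      using rep_R[OF sccs[OF C(1)]] by (simp add: same_scc_def)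
    with sccs[OF C(1)] sccs[OF C(2)] show "C1 = C2" by (rule rep_eq)
  qed
  moreover have "card (rep ` CC) \<le> CARD('n) choose r"
  proof (rule card_le_choose_if_sink)
    show "finite (rep ` CC)" using \<open>finite CC\<close> by simp
    show "rank A = r" if "A \<in> rep ` CC" for A
      using that rep CC by fastforce
    show "mker A \<inter> mim A = {0}" if "A \<in> rep ` CC" for A
      using that rep_R sccs cpr completely_pseudo_regular_mker_Int_mim by blast
    show "\<exists>B\<in>T'. \<forall>A\<in>T' - {B}. mker A \<inter> mim B \<noteq> {0}"
      if "T' \<subseteq> rep ` CC" "T' \<noteq> {}" for T'
      by (rule sink_if_distinct_sccs[OF _ _ distinct that]) (use \<open>finite CC\<close> rep_R sccs in auto)
  qed
  ultimately show ?thesis by (simp add: card_image)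
qed

theorem lemmaV16:
  fixes X R :: "('a::field_char_0 ^ 'n ^ 'n) set"
  assumes "number_field_type TYPE('a)"
    and "linear_zariski_closed X"
    and "R \<subseteq> gen_semigroup X"
    and "\<forall>C\<in>R. completely_pseudo_regular C"
  shows "(\<forall>A B. same_scc R A B \<longrightarrow> sim_S (gen_semigroup X) A B) \<and>
         (\<forall>r. finite {C \<in> sccs R. \<forall>A\<in>C. rank A = r} \<and>
              card {C \<in> sccs R. \<forall>A\<in>C. rank A = r} \<le> CARD('n) choose r)"
  using same_scc_sim_S[OF _ assms(3)]
    finite_if_finite_subsets_card_bdd[OF card_sccs_of_rank_le[OF assms(4)]]
  by blast

end
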